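(* Let $q$ be a prime power, $h\geq 2$, let $f:\mathbb{F}_{q^h}\to\mathbb{F}_q$ be a nonzero $\mathbb{F}_q$-linear functional, $\alpha\in\mathbb{F}_{q^h}\setminus\mathbb{F}_q$ and $\beta\in\mathbb{F}_{q^h}\setminus\{0\}$. Let $\mathcal{L}=\{(x:f(x)+y\alpha:y\beta): x\in\mathbb{F}_{q^h},\ y\in\mathbb{F}_q,\ (x,y)\neq(0,0)\}$ and let $\varphi$ be the collineation of $\mathrm{PG}(2,q^h)$ given by $(x:y:z)\mapsto(z:x:y)$. Suppose that (1) $f(\alpha/\beta)\neq 1$, and (2) for all $k\in\mathbb{F}_q$, $k\neq f\left(\frac{\alpha^2}{\beta}\right)+\left(f\left(\frac{\beta^2}{\alpha+k}\right)+k\right)f\left(\frac{\alpha}{\beta}\right)+k f\left(\frac{\beta^2}{\alpha+k}\right)f\left(\frac{1}{\beta}\right)$. Then $\mathcal{L}$ and $\varphi(\mathcal{L})$ are disjoint.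
   Context: Points of $\mathrm{PG}(2,q^h)$ are written in homogeneous coordinates $(a:b:c)$. *)

theory Defs
  imports "HOL-Computational_Algebra.Primes"
begin

text \<open>The subfield F_q of a finite field of order q^h: the fixed points of x \<mapsto> x^q.\<close>
definition Fsub :: "nat \<Rightarrow> 'a::field set" where
  "Fsub q = {x. x ^ q = x}"

definition Fq_functional :: "nat \<Rightarrow> ('a::field \<Rightarrow> 'a) \<Rightarrow> bool" where
  "Fq_functional q f \<longleftrightarrow> (\<forall>x. f x \<in> Fsub q) \<and> (\<forall>x y. f (x + y) = f x + f y)
     \<and> (\<forall>k\<in>Fsub q. \<forall>x. f (k * x) = k * f x)"

definition pg_point :: "'a::field \<times> 'a \<times> 'a \<Rightarrow> ('a \<times> 'a \<times> 'a) set" where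
  "pg_point v = {(c * fst v, c * fst (snd v), c * snd (snd v)) | c. c \<noteq> 0}"

definition phi_pt :: "('a \<times> 'a \<times> 'a) set \<Rightarrow> ('a \<times> 'a \<times> 'a) set" where
  "phi_pt P = (\<lambda>(a, b, c). (c, a, b)) ` P"

definition L_set :: "nat \<Rightarrow> ('a::field \<Rightarrow> 'a) \<Rightarrow> 'a \<Rightarrow> 'a \<Rightarrow> ('a \<times> 'a \<times> 'a) set set" where
  "L_set q f \<alpha> \<beta> = {pg_point (x, f x + y * \<alpha>, y * \<beta>) | x y. y \<in> Fsub q \<and> (x, y) \<noteq> (0, 0)}"

end

theory Submission
  imports Defs
begin

text \<open>
  A common point of \<open>L\<close> and \<open>\<phi>(L)\<close> has coordinates proportional to both
  \<open>(x, f x + y\<alpha>, y\<beta>)\<close> and \<open>(y'\<beta>, x', f x' + y'\<alpha>)\<close>.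
  If \<open>y' = 0\<close> the point is \<open>(0:\<alpha>:\<beta>) = (0:x':f x')\<close>, so \<open>x' = f x' \<alpha>/\<beta>\<close>
  and applying \<open>f\<close> gives \<open>f(\<alpha>/\<beta>) = 1\<close>.
  Otherwise scale to \<open>y' = 1\<close> and put \<open>k = f x' \<in> F\<^sub>q\<close>; then \<open>\<alpha> + k \<noteq> 0\<close>,
  comparing coordinates gives \<open>x = y\<beta>\<^sup>2/(\<alpha>+k)\<close> and
  \<open>x' = (f(\<beta>\<^sup>2/(\<alpha>+k)) + \<alpha>)(\<alpha>+k)/\<beta>\<close>, and applying \<open>f\<close> to the latter
  yields exactly the relation excluded by hypothesis (2).
\<close>

lemma Fsub_mult: "a \<in> Fsub q \<Longrightarrow> b \<in> Fsub q \<Longrightarrow> (a * b :: 'a::field) \<in> Fsub q"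
  by (simp add: Fsub_def power_mult_distrib)

lemma Fq_functional_range: "Fq_functional q f \<Longrightarrow> f x \<in> Fsub q"
  by (simp add: Fq_functional_def)

lemma Fq_functional_add: "Fq_functional q f \<Longrightarrow> f (x + y) = f x + f y"
  by (simp add: Fq_functional_def)

lemma Fq_functional_scale: "Fq_functional q f \<Longrightarrow> k \<in> Fsub q \<Longrightarrow> f (k * x) = k * f x"
  by (simp add: Fq_functional_def)

lemma Fq_functional_zero:
  assumes "Fq_functional q f"
  shows "f 0 = 0"
proof -
  have "f 0 + 0 = f 0 + f 0"
    using Fq_functional_add[OF assms, of 0 0] by simp
  then show ?thesis
    by (metis add_left_cancel)
qed

lemma Fq_functional_minus:
  assumes "Fq_functional q f"
  shows "f (- x) = - f x"
  using Fq_functional_add[OF assms, of x "- x"] Fq_functional_zero[OF assms]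
  by (simp add: eq_neg_iff_add_eq_0 add.commute)

lemma Fq_functional_expand:
  assumes f: "Fq_functional q f" and F: "F \<in> Fsub q" and k: "k \<in> Fsub q"
  shows "f ((F + \<alpha>) * (\<alpha> + k) / \<beta>)
           = f (\<alpha>^2 / \<beta>) + (F + k) * f (\<alpha> / \<beta>) + k * F * f (1 / \<beta>)"
proof -
  have "(F + \<alpha>) * (\<alpha> + k) / \<beta> = F * (\<alpha> / \<beta>) + ((F * k) * (1 / \<beta>) + (\<alpha>^2 / \<beta> + k * (\<alpha> / \<beta>)))"
    by (simp add: algebra_simps add_divide_distrib power2_eq_square)
  then have "f ((F + \<alpha>) * (\<alpha> + k) / \<beta>)
      = F * f (\<alpha> / \<beta>) + ((F * k) * f (1 / \<beta>) + (f (\<alpha>^2 / \<beta>) + k * f (\<alpha> / \<beta>)))"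
    by (simp only: Fq_functional_add[OF f] Fq_functional_scale[OF f] F k Fsub_mult[OF F k])
  then show ?thesis
    by (simp add: algebra_simps)
qed

lemma phi_pt_pg_point: "phi_pt (pg_point (a, b, c)) = pg_point (c, a, b)"
  unfolding phi_pt_def pg_point_def by (auto simp: image_iff; blast)

lemma pg_point_eq_proportional:
  assumes "pg_point (a, b, c) = pg_point (a', b', c')"
  shows "\<exists>t. t \<noteq> 0 \<and> a = t * a' \<and> b = t * b' \<and> c = t * c'"
proof -
  have "(a, b, c) \<in> pg_point (a, b, c)"
    unfolding pg_point_def by force
  then have "(a, b, c) \<in> pg_point (a', b', c')"
    using assms by simp
  then show ?thesis
    unfolding pg_point_def by auto
qed

lemma L_set_common_point_coordinates:
  assumes "P \<in> L_set q f \<alpha> \<beta>" and "P \<in> phi_pt ` L_set q f \<alpha> \<beta>"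
  obtains x y x' y' c where "y \<in> Fsub q" and "(x, y) \<noteq> (0, 0)" and "y' \<in> Fsub q" and "c \<noteq> 0"
    and "x = c * (y' * \<beta>)" and "f x + y * \<alpha> = c * x'" and "y * \<beta> = c * (f x' + y' * \<alpha>)"
proof -
  obtain x y where "y \<in> Fsub q" and "(x, y) \<noteq> (0, 0)"
    and P: "P = pg_point (x, f x + y * \<alpha>, y * \<beta>)"
    using assms(1) unfolding L_set_def by blast
  obtain x' y' where "y' \<in> Fsub q" and "P = pg_point (y' * \<beta>, x', f x' + y' * \<alpha>)"
    using assms(2) unfolding L_set_def by (auto simp: phi_pt_pg_point)
  then have "pg_point (x, f x + y * \<alpha>, y * \<beta>) = pg_point (y' * \<beta>, x', f x' + y' * \<alpha>)"
    using P by simp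
  then show thesis
    using that \<open>y \<in> Fsub q\<close> \<open>(x, y) \<noteq> (0, 0)\<close> \<open>y' \<in> Fsub q\<close> pg_point_eq_proportional
    by metis
qed

lemma no_common_point_with_first_coordinate_zero:
  assumes f: "Fq_functional q f" and "\<beta> \<noteq> 0" and "f (\<alpha> / \<beta>) \<noteq> 1" and "y \<noteq> 0"
    and \<alpha>: "y * \<alpha> = c * x'" and \<beta>: "y * \<beta> = c * f x'"
  shows False
proof -
  have s: "f x' \<in> Fsub q"
    by (rule Fq_functional_range[OF f])
  have "c \<noteq> 0" and "f x' \<noteq> 0"
    using \<beta> \<open>y \<noteq> 0\<close> \<open>\<beta> \<noteq> 0\<close> by auto
  have "y = c * f x' / \<beta>"
    using \<beta> \<open>\<beta> \<noteq> 0\<close> by (simp add: eq_divide_eq)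
  then have "c * x' = c * (f x' * (\<alpha> / \<beta>))"
    using \<alpha> by (simp add: mult.assoc)
  then have "x' = f x' * (\<alpha> / \<beta>)"
    using \<open>c \<noteq> 0\<close> by (metis mult_left_cancel)
  then have "f x' = f x' * f (\<alpha> / \<beta>)"
    using Fq_functional_scale[OF f s] arg_cong[where f = f] by metis
  then show False
    using \<open>f x' \<noteq> 0\<close> assms(3) by simp
qed

lemma common_point_relation:
  assumes f: "Fq_functional q f" and y: "y \<in> Fsub q" and \<alpha>: "\<alpha> \<notin> Fsub q" and "\<beta> \<noteq> 0"
    and "c \<noteq> 0"
    and coord1: "x = c * \<beta>" and coord2: "f x + y * \<alpha> = c * x'"
    and coord3: "y * \<beta> = c * (f x' + \<alpha>)"
  defines "k \<equiv> f x'"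
  shows "k = f (\<alpha>^2 / \<beta>) + (f (\<beta>^2 / (\<alpha> + k)) + k) * f (\<alpha> / \<beta>)
               + k * f (\<beta>^2 / (\<alpha> + k)) * f (1 / \<beta>)"
proof -
  define F where "F = f (\<beta>^2 / (\<alpha> + k))"
  have k: "k \<in> Fsub q" and F: "F \<in> Fsub q"
    unfolding k_def F_def by (simp_all add: Fq_functional_range[OF f])
  have "\<alpha> + k \<noteq> 0"
  proof
    assume "\<alpha> + k = 0"
    then have "\<alpha> = f (- x')"
      unfolding k_def Fq_functional_minus[OF f] by (simp add: eq_neg_iff_add_eq_0)
    then show False
      using \<alpha> Fq_functional_range[OF f] by simp
  qed
  have c: "c = y * \<beta> / (\<alpha> + k)"
    using coord3 \<open>\<alpha> + k \<noteq> 0\<close> unfolding k_def by (simp add: field_simps)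
  then have "y \<noteq> 0"
    using \<open>c \<noteq> 0\<close> by auto
  have "x = y * (\<beta>^2 / (\<alpha> + k))"
    using coord1 c by (simp add: power2_eq_square)
  then have "f x = y * F"
    unfolding F_def using Fq_functional_scale[OF f y] by presburger
  then have "y * (\<beta> * x') = y * ((F + \<alpha>) * (\<alpha> + k))"
    using coord2 c \<open>\<alpha> + k \<noteq> 0\<close> by (simp add: field_simps)
  then have "\<beta> * x' = (F + \<alpha>) * (\<alpha> + k)"
    using \<open>y \<noteq> 0\<close> by simp
  then have "x' = (F + \<alpha>) * (\<alpha> + k) / \<beta>"
    using \<open>\<beta> \<noteq> 0\<close> by (simp add: field_simps)
  then have "k = f ((F + \<alpha>) * (\<alpha> + k) / \<beta>)"
    using k_def by metis
  also have "\<dots> = f (\<alpha>^2 / \<beta>) + (F + k) * f (\<alpha> / \<beta>) + k * F * f (1 / \<beta>)"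
    by (rule Fq_functional_expand[OF f F k])
  finally have "k = f (\<alpha>^2 / \<beta>) + (F + k) * f (\<alpha> / \<beta>) + k * F * f (1 / \<beta>)" .
  then show ?thesis
    unfolding F_def .
qed

lemma common_point_relation_scaled:
  assumes f: "Fq_functional q f" and "y \<in> Fsub q" and y': "y' \<in> Fsub q" "y' \<noteq> 0"
    and "\<alpha> \<notin> Fsub q" and "\<beta> \<noteq> 0" and "c \<noteq> 0"
    and coord1: "x = c * (y' * \<beta>)" and coord2: "f x + y * \<alpha> = c * x'"
    and coord3: "y * \<beta> = c * (f x' + y' * \<alpha>)"
  obtains k where "k \<in> Fsub q" and "k = f (\<alpha>^2 / \<beta>) + (f (\<beta>^2 / (\<alpha> + k)) + k) * f (\<alpha> / \<beta>)
                 + k * f (\<beta>^2 / (\<alpha> + k)) * f (1 / \<beta>)"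
proof -
  define x'' where "x'' = x' / y'"
  have "x' = y' * x''"
    using \<open>y' \<noteq> 0\<close> unfolding x''_def by simp
  moreover have "f x' = y' * f x''"
    unfolding \<open>x' = y' * x''\<close> using Fq_functional_scale[OF f y'(1)] .
  ultimately have "x = (c * y') * \<beta>" and "f x + y * \<alpha> = (c * y') * x''"
    and "y * \<beta> = (c * y') * (f x'' + \<alpha>)"
    using coord1 coord2 coord3 by (simp_all add: algebra_simps)
  moreover have "c * y' \<noteq> 0"
    using \<open>c \<noteq> 0\<close> \<open>y' \<noteq> 0\<close> by simp
  ultimately show thesis
    using that[OF Fq_functional_range[OF f]] common_point_relation[OF f assms(2,5,6)] by blast
qed

theorem theorem4p1:
  fixes f :: "'a::{field,finite} \<Rightarrow> 'a" and q h :: nat and \<alpha> \<beta> :: 'a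
  assumes "\<exists>p m. prime p \<and> m > 0 \<and> q = p ^ m"
    and "h \<ge> 2"
    and "card (UNIV :: 'a set) = q ^ h"
    and "Fq_functional q f"
    and "f \<noteq> (\<lambda>_. 0)"
    and "\<alpha> \<notin> Fsub q"
    and "\<beta> \<noteq> 0"
    and "f (\<alpha> / \<beta>) \<noteq> 1"
    and "\<forall>k\<in>Fsub q. k \<noteq> f (\<alpha>^2 / \<beta>) + (f (\<beta>^2 / (\<alpha> + k)) + k) * f (\<alpha> / \<beta>)
                          + k * f (\<beta>^2 / (\<alpha> + k)) * f (1 / \<beta>)"
  shows "L_set q f \<alpha> \<beta> \<inter> phi_pt ` L_set q f \<alpha> \<beta> = {}"
proof (rule ccontr)
  note f = assms(4)
  assume "L_set q f \<alpha> \<beta> \<inter> phi_pt ` L_set q f \<alpha> \<beta> \<noteq> {}"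
  then obtain x y x' y' c where y: "y \<in> Fsub q" and "(x, y) \<noteq> (0, 0)" and y': "y' \<in> Fsub q"
    and "c \<noteq> 0" and coord1: "x = c * (y' * \<beta>)"
    and coord2: "f x + y * \<alpha> = c * x'" and coord3: "y * \<beta> = c * (f x' + y' * \<alpha>)"
    by (metis L_set_common_point_coordinates disjoint_iff)
  show False
  proof (cases "y' = 0")
    case True
    then have "x = 0" and "y \<noteq> 0"
      using coord1 \<open>(x, y) \<noteq> (0, 0)\<close> by simp_all
    then show False
      using no_common_point_with_first_coordinate_zero[OF f assms(7,8)] coord2 coord3 True
        Fq_functional_zero[OF f] by simp
  next
    case False
    obtain k where "k \<in> Fsub q" and "k = f (\<alpha>^2 / \<beta>) + (f (\<beta>^2 / (\<alpha> + k)) + k) * f (\<alpha> / \<beta>)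
                 + k * f (\<beta>^2 / (\<alpha> + k)) * f (1 / \<beta>)"
      using common_point_relation_scaled[OF f y y' False assms(6,7) \<open>c \<noteq> 0\<close> coord1 coord2 coord3] .
    with assms(9) show False
      by blast
  qed
qed

end
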